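(* Let $0<\delta<1$. If $\beta+2\alpha<1$ and $s_N=o(N)$, then $$\mu_{N,\beta,\alpha}\big(|m_1|,\dots,|m_{s_N}|>\delta\big)\le\exp\Big\{-\Big(\tfrac{1-(\beta+2\alpha)}{2}-o(1)\Big)N\delta^2\Big\}=o(1).$$ At the critical temperature $\beta+2\alpha=1$ one has $$\mu_{N,\beta,\alpha}\big(|m_1|,\dots,|m_{s_N}|>\delta\big)\le\exp\Big\{-\Big(\tfrac{1}{12}-o(1)\Big)N\delta^4\Big\}.$$ Here $\{|m_1|,\dots,|m_{s_N}|>\delta\}$ is the event that $|m_k|>\delta$ for all $k=1,\dots,s_N$.
   Context: Parameters $\beta>2\alpha>0$. Let $(s_N)$ be a non-decreasing sequence of positive integers with $s_N$ dividing $N$; $\{1,\dots,N\}$ is partitioned into blocks $S_1,\dots,S_{s_N}$ of size $N/s_N$, block indices cyclic. For $\sigma\in\{-1,+1\}^N$, $m_k=\frac{s_N}{N}\sum_{i\in S_k}\sigma_i$, $m=(m_1,\dots,m_{s_N})$. $A=\beta I+\alpha(P+P^T)$ with $P$ the $s_N\times s_N$ cyclic shift matrix. The Gibbs measure is $\mu_{N,\beta,\alpha}(\sigma)=Z_{N,\beta,\alpha}^{-1}\exp\{\frac{N}{2s_N}m^TAm\}2^{-N}$ on $\{-1,+1\}^N$. *)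

theory Defs
  imports "HOL-Analysis.Analysis" "HOL-Library.FuncSet"
begin

text \<open>Spin configurations on {0..<N} (the paper's {1..N}), values in {-1,+1}.\<close>
definition configs :: "nat \<Rightarrow> (nat \<Rightarrow> real) set" where
  "configs N = PiE {..<N} (\<lambda>_. {-1, 1})"

text \<open>Block k (0 \<le> k < s, the paper's S_(k+1)): consecutive indices of size N/s.\<close>
definition block :: "nat \<Rightarrow> nat \<Rightarrow> nat \<Rightarrow> nat set" where
  "block N s k = {k * (N div s) ..< Suc k * (N div s)}"

definition blockmag :: "nat \<Rightarrow> nat \<Rightarrow> (nat \<Rightarrow> real) \<Rightarrow> nat \<Rightarrow> real" where
  "blockmag N s \<sigma> k = real s / real N * (\<Sum>i\<in>block N s k. \<sigma> i)"

definition shiftP :: "nat \<Rightarrow> nat \<Rightarrow> nat \<Rightarrow> real" where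
  "shiftP s i j = (if j = (i + 1) mod s then 1 else 0)"

definition interA :: "real \<Rightarrow> real \<Rightarrow> nat \<Rightarrow> nat \<Rightarrow> nat \<Rightarrow> real" where
  "interA \<beta> \<alpha> s i j = \<beta> * (if i = j then 1 else 0) + \<alpha> * (shiftP s i j + shiftP s j i)"

definition energy :: "nat \<Rightarrow> nat \<Rightarrow> real \<Rightarrow> real \<Rightarrow> (nat \<Rightarrow> real) \<Rightarrow> real" where
  "energy N s \<beta> \<alpha> \<sigma> = real N / (2 * real s) *
     (\<Sum>i<s. \<Sum>j<s. blockmag N s \<sigma> i * interA \<beta> \<alpha> s i j * blockmag N s \<sigma> j)"

definition gibbs_weight :: "nat \<Rightarrow> nat \<Rightarrow> real \<Rightarrow> real \<Rightarrow> (nat \<Rightarrow> real) \<Rightarrow> real" where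
  "gibbs_weight N s \<beta> \<alpha> \<sigma> = exp (energy N s \<beta> \<alpha> \<sigma>) * (1/2) ^ N"

definition partition_fn :: "nat \<Rightarrow> nat \<Rightarrow> real \<Rightarrow> real \<Rightarrow> real" where
  "partition_fn N s \<beta> \<alpha> = (\<Sum>\<sigma>\<in>configs N. gibbs_weight N s \<beta> \<alpha> \<sigma>)"

definition gibbs :: "nat \<Rightarrow> nat \<Rightarrow> real \<Rightarrow> real \<Rightarrow> (nat \<Rightarrow> real) set \<Rightarrow> real" where
  "gibbs N s \<beta> \<alpha> E = (\<Sum>\<sigma>\<in>E \<inter> configs N. gibbs_weight N s \<beta> \<alpha> \<sigma>) / partition_fn N s \<beta> \<alpha>"

definition all_large :: "nat \<Rightarrow> nat \<Rightarrow> real \<Rightarrow> (nat \<Rightarrow> real) set" where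
  "all_large N s \<delta> = {\<sigma> \<in> configs N. \<forall>k<s. \<bar>blockmag N s \<sigma> k\<bar> > \<delta>}"

end

theory Submission
  imports Defs "HOL-Real_Asymp.Real_Asymp"
begin

(* Since beta >= 2 alpha >= 0, the cyclic estimate |sum_k m_k m_(k+1)| <= sum_k m_k^2 gives
   0 <= m^T A m <= (beta + 2 alpha) |m|^2: the lower bound makes the partition function at least 1,
   the upper bound lets the Gibbs weight factorise over the blocks.  Each block sum S_k = (N/s) m_k
   is an integer j with delta N/s < |j| <= N/s; summing over these values and tilting block k by
   exp (t_j (S_k - j)), which is 1 when S_k = j, the blocks become independent under the uniform
   measure, each contributing cosh(t_j)^(N/s).  The Chernoff bound
   cosh t <= exp (t x - x^2/2 - x^4/12) for |x| <= 1, a consequence of the entropy inequality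
   (1+x) ln (1+x) + (1-x) ln (1-x) >= x^2 + x^4/6, leaves exp (-(N/s) ((1-beta-2alpha) x^2/2 + x^4/12))
   per value, and the at most 2N/s + 1 values per block cost only a factor exp (o(N)) as s = o(N). *)

lemma ln_one_plus_minus_ln_one_minus_ge:
  fixes x :: real assumes "0 \<le> x" "x < 1"
  shows "2*x + 2*x^3/3 \<le> ln (1+x) - ln (1-x)"
proof -
  let ?G = "\<lambda>t::real. ln (1+t) - ln (1-t) - 2*t - 2*t^3/3"
  have "?G 0 \<le> ?G x"
  proof (rule DERIV_nonneg_imp_nondecreasing[OF assms(1)])
    fix t :: real assume t: "0 \<le> t" "t \<le> x"
    with assms have "t < 1" by simp
    then have "DERIV ?G t :> 1/(1+t) + 1/(1-t) - 2 - 2*t^2"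
      using t by (auto intro!: derivative_eq_intros)
    moreover have "2 + 2*t^2 \<le> 1/(1+t) + 1/(1-t)"
    proof -
      have "0 < 1 - t^2" using \<open>t < 1\<close> t(1) by (simp add: power_less_one_iff)
      moreover have "(2 + 2*t^2) * (1-t^2) \<le> 2" by (simp add: algebra_simps)
      ultimately have "2 + 2*t^2 \<le> 2/(1-t^2)" by (simp add: pos_le_divide_eq)
      also have "\<dots> = 1/(1+t) + 1/(1-t)"
        using t \<open>t < 1\<close> by (simp add: field_simps power2_eq_square)
      finally show ?thesis .
    qed
    ultimately show "\<exists>y. DERIV ?G t :> y \<and> 0 \<le> y" by auto
  qed
  then show ?thesis by simp
qed

lemma entropy_ge_square_plus_quartic:
  fixes x :: real assumes "0 \<le> x" "x < 1"
  shows "x^2 + x^4/6 \<le> (1+x) * ln (1+x) + (1-x) * ln (1-x)"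
proof -
  let ?F = "\<lambda>t::real. (1+t) * ln (1+t) + (1-t) * ln (1-t) - t^2 - t^4/6"
  have "?F 0 \<le> ?F x"
  proof (rule DERIV_nonneg_imp_nondecreasing[OF assms(1)])
    fix t :: real assume t: "0 \<le> t" "t \<le> x"
    with assms have "t < 1" by simp
    then have "DERIV ?F t :> ln (1+t) - ln (1-t) - 2*t - 2*t^3/3"
      using t by (auto intro!: derivative_eq_intros)
    moreover have "0 \<le> ln (1+t) - ln (1-t) - 2*t - 2*t^3/3"
      using ln_one_plus_minus_ln_one_minus_ge[OF t(1) \<open>t < 1\<close>] by simp
    ultimately show "\<exists>y. DERIV ?F t :> y \<and> 0 \<le> y" by auto
  qed
  then show ?thesis by simp
qed

lemma cosh_artanh_le:
  fixes x :: real assumes "\<bar>x\<bar> < 1"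
  shows "cosh (artanh x) \<le> exp (artanh x * x - x^2/2 - x^4/12)"
proof -
  have nonneg: "cosh (artanh y) \<le> exp (artanh y * y - y^2/2 - y^4/12)"
    if "0 \<le> y" "y < 1" for y :: real
  proof -
    define a b where "a = ln (1+y)" and "b = ln (1-y)"
    have ea: "exp a = 1+y" and eb: "exp b = 1-y" using that by (simp_all add: a_def b_def)
    have art: "artanh y = (a - b)/2"
      using that by (simp add: artanh_def a_def b_def ln_div)
    have "cosh (artanh y) = exp (-(a+b)/2) * (exp a + exp b) / 2"
      unfolding art cosh_field_def
      by (simp add: exp_add[symmetric] algebra_simps diff_divide_distrib add_divide_distrib)
    also have "\<dots> = exp (-(a+b)/2)" using ea eb by simp
    also have "\<dots> \<le> exp (artanh y * y - y^2/2 - y^4/12)"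
      using entropy_ge_square_plus_quartic[OF that] unfolding art a_def[symmetric] b_def[symmetric]
      by (simp add: field_simps)
    finally show ?thesis .
  qed
  show ?thesis
  proof (cases "0 \<le> x")
    case True
    then show ?thesis using nonneg assms by simp
  next
    case False
    then show ?thesis using nonneg[of "-x"] assms by simp
  qed
qed

(* The endpoint x = 1 of the Chernoff bound, where artanh x is infinite: the rate ln 2 >= 2/3
   still exceeds 1/2 + 1/12. *)
lemma cosh_le_exp_minus_7_12:
  "\<exists>l. cosh l \<le> exp (l - 7/12 :: real)"
proof -
  define t :: real where "t = 2 * exp (-7/12) - 1"
  have "exp (7/12::real) < exp (ln 2)"
    using ln2_ge_two_thirds by (intro exp_less_mono) simp
  then have "0 < t" unfolding t_def by (simp add: exp_minus field_simps)
  define l where "l = - ln t / 2"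
  have "cosh l = exp l * (1 + exp (-2*l)) / 2"
    by (simp add: cosh_field_def distrib_left exp_add[symmetric])
  also have "exp (-2*l) = t" using \<open>0 < t\<close> by (simp add: l_def)
  finally have "cosh l = exp l * exp (-7/12)" by (simp add: t_def)
  then show ?thesis by (auto simp: exp_add[symmetric] intro!: exI[of _ l])
qed

lemma cosh_chernoff_bound:
  fixes x :: real assumes "\<bar>x\<bar> \<le> 1"
  shows "\<exists>l. cosh l \<le> exp (l*x - x^2/2 - x^4/12)"
proof -
  consider "\<bar>x\<bar> < 1" | "x = 1" | "x = -1" using assms by linarith
  then show ?thesis
  proof cases
    case 1
    then show ?thesis using cosh_artanh_le by blast
  next
    case 2
    then show ?thesis using cosh_le_exp_minus_7_12 by simp
  next
    case 3
    obtain l where "cosh l \<le> exp (l - 7/12 :: real)" using cosh_le_exp_minus_7_12 by blast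
    then show ?thesis using 3 by (intro exI[of _ "-l"]) simp
  qed
qed

lemma sum_shift_mod:
  fixes f :: "nat \<Rightarrow> 'a::comm_monoid_add" assumes "0 < s"
  shows "(\<Sum>i<s. f ((i+1) mod s)) = (\<Sum>i<s. f i)"
proof -
  obtain t where s: "s = Suc t" using assms by (cases s) auto
  have "(\<Sum>i<s. f ((i+1) mod s)) = (\<Sum>i<t. f (Suc i)) + f 0"
    by (simp add: s)
  also have "\<dots> = (\<Sum>i<s. f i)"
    using sum.lessThan_Suc_shift[of f t] by (simp add: s add.commute)
  finally show ?thesis .
qed

lemma shiftP_form:
  fixes m :: "nat \<Rightarrow> real" assumes "0 < s"
  shows "(\<Sum>i<s. \<Sum>j<s. m i * shiftP s i j * m j) = (\<Sum>i<s. m i * m ((i+1) mod s))"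
  using assms unfolding shiftP_def by (simp add: if_distrib if_distribR cong: if_cong)

lemma interA_form:
  fixes m :: "nat \<Rightarrow> real" assumes "0 < s"
  shows "(\<Sum>i<s. \<Sum>j<s. m i * interA \<beta> \<alpha> s i j * m j)
     = \<beta> * (\<Sum>i<s. m i ^ 2) + 2 * \<alpha> * (\<Sum>i<s. m i * m ((i+1) mod s))"
proof -
  have entry: "m i * interA \<beta> \<alpha> s i j * m j = \<beta> * (if i = j then m i * m j else 0)
      + \<alpha> * (m i * shiftP s i j * m j) + \<alpha> * (m j * shiftP s j i * m i)" for i j
    by (simp add: interA_def algebra_simps)
  have "(\<Sum>i<s. \<Sum>j<s. m i * interA \<beta> \<alpha> s i j * m j)
      = \<beta> * (\<Sum>i<s. \<Sum>j<s. if i = j then m i * m j else 0)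
        + \<alpha> * (\<Sum>i<s. \<Sum>j<s. m i * shiftP s i j * m j)
        + \<alpha> * (\<Sum>i<s. \<Sum>j<s. m j * shiftP s j i * m i)"
    by (simp only: entry sum.distrib sum_distrib_left)
  also have "(\<Sum>i<s. \<Sum>j<s. m j * shiftP s j i * m i) = (\<Sum>i<s. \<Sum>j<s. m i * shiftP s i j * m j)"
    by (rule sum.swap)
  also have "(\<Sum>i<s. \<Sum>j<s. if i = j then m i * m j else 0) = (\<Sum>i<s. m i ^ 2)"
    by (simp add: power2_eq_square)
  also have "(\<Sum>i<s. \<Sum>j<s. m i * shiftP s i j * m j) = (\<Sum>i<s. m i * m ((i+1) mod s))"
    by (rule shiftP_form[OF assms])
  finally show ?thesis by (simp add: algebra_simps)
qed

lemma abs_cyclic_sum_le: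
  fixes m :: "nat \<Rightarrow> real" assumes "0 < s"
  shows "\<bar>\<Sum>i<s. m i * m ((i+1) mod s)\<bar> \<le> (\<Sum>i<s. m i ^ 2)"
proof -
  have "\<bar>\<Sum>i<s. m i * m ((i+1) mod s)\<bar> \<le> (\<Sum>i<s. \<bar>m i * m ((i+1) mod s)\<bar>)"
    by (rule sum_abs)
  also have "\<dots> \<le> (\<Sum>i<s. (m i ^ 2 + m ((i+1) mod s) ^ 2) / 2)"
  proof (rule sum_mono)
    fix i
    have "0 \<le> (\<bar>m i\<bar> - \<bar>m ((i+1) mod s)\<bar>)^2" by simp
    then show "\<bar>m i * m ((i+1) mod s)\<bar> \<le> (m i ^ 2 + m ((i+1) mod s) ^ 2) / 2"
      by (simp add: power2_eq_square algebra_simps abs_mult)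
  qed
  also have "\<dots> = (\<Sum>i<s. m i ^ 2)"
    using sum_shift_mod[OF assms, of "\<lambda>i. m i ^ 2"]
    by (simp add: sum.distrib sum_divide_distrib[symmetric])
  finally show ?thesis .
qed

lemma interA_form_bounds:
  fixes m :: "nat \<Rightarrow> real" assumes "0 < s" "0 \<le> \<alpha>" "2*\<alpha> \<le> \<beta>"
  shows "0 \<le> (\<Sum>i<s. \<Sum>j<s. m i * interA \<beta> \<alpha> s i j * m j)"
    and "(\<Sum>i<s. \<Sum>j<s. m i * interA \<beta> \<alpha> s i j * m j) \<le> (\<beta> + 2*\<alpha>) * (\<Sum>i<s. m i ^ 2)"
proof -
  let ?Q = "\<Sum>i<s. m i ^ 2" and ?C = "\<Sum>i<s. m i * m ((i+1) mod s)"
  have C: "-?Q \<le> ?C" "?C \<le> ?Q" using abs_cyclic_sum_le[OF assms(1), of m] by linarith+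
  have lower: "2*\<alpha> * (-?Q) \<le> 2*\<alpha> * ?C" and upper: "2*\<alpha> * ?C \<le> 2*\<alpha> * ?Q"
    using C assms(2) by (intro mult_left_mono; simp)+
  have "2*\<alpha> * ?Q \<le> \<beta> * ?Q"
    using assms(3) by (simp add: mult_right_mono sum_nonneg)
  with lower upper show "0 \<le> (\<Sum>i<s. \<Sum>j<s. m i * interA \<beta> \<alpha> s i j * m j)"
    and "(\<Sum>i<s. \<Sum>j<s. m i * interA \<beta> \<alpha> s i j * m j) \<le> (\<beta> + 2*\<alpha>) * ?Q"
    unfolding interA_form[OF assms(1)] by (simp_all add: distrib_right)
qed

lemma finite_configs: "finite (configs N)"
  unfolding configs_def by (rule finite_PiE) auto

lemma card_configs: "card (configs N) = 2 ^ N"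
  unfolding configs_def by (simp add: card_PiE numeral_2_eq_2)

lemma sum_configs_prod:
  fixes f :: "nat \<Rightarrow> real \<Rightarrow> real"
  shows "(\<Sum>\<sigma>\<in>configs N. \<Prod>i<N. f i (\<sigma> i)) = (\<Prod>i<N. f i 1 + f i (-1))"
proof -
  have "(\<Sum>\<sigma>\<in>configs N. \<Prod>i<N. f i (\<sigma> i)) = (\<Prod>i<N. \<Sum>y\<in>{-1,1}. f i y)"
    unfolding configs_def by (rule prod_sum_PiE[symmetric]) auto
  also have "\<dots> = (\<Prod>i<N. f i 1 + f i (-1))"
    by (intro prod.cong) auto
  finally show ?thesis .
qed

lemma sum_pm_one_int:
  fixes \<sigma> :: "nat \<Rightarrow> real"
  assumes "finite A" "\<forall>i\<in>A. \<sigma> i \<in> {-1,1}"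
  shows "\<exists>j::int. (\<Sum>i\<in>A. \<sigma> i) = of_int j \<and> \<bar>j\<bar> \<le> int (card A)"
  using assms
proof (induction A rule: finite_induct)
  case empty
  then show ?case by simp
next
  case (insert x F)
  then obtain j :: int where j: "(\<Sum>i\<in>F. \<sigma> i) = of_int j" "\<bar>j\<bar> \<le> int (card F)" by auto
  from insert consider "\<sigma> x = -1" | "\<sigma> x = 1" by auto
  then show ?case
  proof cases
    case 1
    then show ?thesis using insert j by (intro exI[of _ "j - 1"]) auto
  next
    case 2
    then show ?thesis using insert j by (intro exI[of _ "j + 1"]) auto
  qed
qed

definition block_sum :: "nat \<Rightarrow> (nat \<Rightarrow> real) \<Rightarrow> nat \<Rightarrow> real" where
  "block_sum n \<sigma> k = (\<Sum>i\<in>{k*n..<k*n+n}. \<sigma> i)"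

lemma blockmag_eq_block_sum:
  assumes "0 < s"
  shows "blockmag (s*n) s \<sigma> k = block_sum n \<sigma> k / n"
proof -
  have "block (s*n) s k = {k*n..<k*n+n}"
    using assms by (simp add: block_def add.commute)
  then show ?thesis
    using assms by (simp add: blockmag_def block_sum_def)
qed

lemma block_sum_int:
  assumes "\<sigma> \<in> configs (s*n)" "k < s"
  shows "\<exists>j::int. block_sum n \<sigma> k = of_int j \<and> \<bar>j\<bar> \<le> int n"
proof -
  have "k*n + n \<le> s*n"
    using assms(2) by (metis Suc_leI add.commute mult_Suc mult_le_mono1)
  then have "{k*n..<k*n+n} \<subseteq> {..<s*n}" by auto
  then have "\<forall>i\<in>{k*n..<k*n+n}. \<sigma> i \<in> {-1,1}"
    using assms(1) unfolding configs_def by auto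
  from sum_pm_one_int[OF _ this] show ?thesis unfolding block_sum_def by simp
qed

lemma div_eq_of_mem_block:
  fixes i k n :: nat
  shows "i \<in> {k*n..<k*n+n} \<Longrightarrow> i div n = k"
  by (intro div_nat_eqI) (auto simp: mult.commute)

lemma sum_configs_exp_block_sums:
  fixes t :: "nat \<Rightarrow> real"
  shows "(\<Sum>\<sigma>\<in>configs (s*n). (1/2)^(s*n) * (\<Prod>k<s. exp (t k * block_sum n \<sigma> k)))
       = (\<Prod>k<s. cosh (t k) ^ n)"
proof -
  define \<nu> where "\<nu> i = t (i div n)" for i
  have blocks: "(\<Prod>k<s. exp (t k * block_sum n \<sigma> k)) = (\<Prod>i<s*n. exp (\<nu> i * \<sigma> i))" for \<sigma>
  proof -
    have "(\<Prod>k<s. exp (t k * block_sum n \<sigma> k)) = (\<Prod>k<s. \<Prod>i\<in>{k*n..<k*n+n}. exp (\<nu> i * \<sigma> i))"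
      unfolding block_sum_def sum_distrib_left
      by (auto simp: exp_sum \<nu>_def div_eq_of_mem_block intro!: prod.cong)
    also have "\<dots> = (\<Prod>i<s*n. exp (\<nu> i * \<sigma> i))"
      by (rule prod.nat_group)
    finally show ?thesis .
  qed
  have "(\<Sum>\<sigma>\<in>configs (s*n). (1/2)^(s*n) * (\<Prod>k<s. exp (t k * block_sum n \<sigma> k)))
      = (\<Sum>\<sigma>\<in>configs (s*n). \<Prod>i<s*n. exp (\<nu> i * \<sigma> i) / 2)"
    by (simp add: blocks prod_dividef power_one_over)
  also have "\<dots> = (\<Prod>i<s*n. cosh (\<nu> i))"
    using sum_configs_prod[of "\<lambda>i y. exp (\<nu> i * y) / 2" "s*n"]
    by (simp add: cosh_field_def add_divide_distrib)
  also have "\<dots> = (\<Prod>k<s. \<Prod>i\<in>{k*n..<k*n+n}. cosh (\<nu> i))"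
    by (rule prod.nat_group[symmetric])
  also have "\<dots> = (\<Prod>k<s. cosh (t k) ^ n)"
    by (intro prod.cong refl) (simp add: \<nu>_def div_eq_of_mem_block)
  finally show ?thesis .
qed

lemma sum_configs_block_mixture:
  fixes a t :: "'j \<Rightarrow> real"
  assumes "finite J"
  shows "(\<Sum>\<sigma>\<in>configs (s*n). (1/2)^(s*n) *
            (\<Prod>k<s. \<Sum>j\<in>J. a j * exp (t j * block_sum n \<sigma> k)))
       = (\<Sum>j\<in>J. a j * cosh (t j) ^ n) ^ s"
proof -
  let ?R = "PiE {..<s} (\<lambda>_. J)"
  have "(\<Sum>\<sigma>\<in>configs (s*n). (1/2)^(s*n) * (\<Prod>k<s. \<Sum>j\<in>J. a j * exp (t j * block_sum n \<sigma> k)))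
      = (\<Sum>\<sigma>\<in>configs (s*n). \<Sum>\<rho>\<in>?R.
           (\<Prod>k<s. a (\<rho> k)) * ((1/2)^(s*n) * (\<Prod>k<s. exp (t (\<rho> k) * block_sum n \<sigma> k))))"
    by (simp add: prod_sum_PiE[OF _ assms] sum_distrib_left prod.distrib mult_ac)
  also have "\<dots> = (\<Sum>\<rho>\<in>?R. (\<Prod>k<s. a (\<rho> k)) *
           (\<Sum>\<sigma>\<in>configs (s*n). (1/2)^(s*n) * (\<Prod>k<s. exp (t (\<rho> k) * block_sum n \<sigma> k))))"
    by (subst sum.swap) (simp add: sum_distrib_left)
  also have "\<dots> = (\<Sum>\<rho>\<in>?R. \<Prod>k<s. a (\<rho> k) * cosh (t (\<rho> k)) ^ n)"
    by (simp add: sum_configs_exp_block_sums prod.distrib)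
  also have "\<dots> = (\<Prod>k<s. \<Sum>j\<in>J. a j * cosh (t j) ^ n)"
    by (rule prod_sum_PiE[OF _ assms, symmetric]) simp
  also have "\<dots> = (\<Sum>j\<in>J. a j * cosh (t j) ^ n) ^ s"
    by simp
  finally show ?thesis .
qed

lemma gibbs_nonneg: "0 \<le> gibbs N s \<beta> \<alpha> E"
  unfolding gibbs_def partition_fn_def gibbs_weight_def
  by (intro divide_nonneg_nonneg sum_nonneg) auto

lemma gibbs_le_sum_gibbs_weight:
  assumes "0 < s" "0 \<le> \<alpha>" "2*\<alpha> \<le> \<beta>"
  shows "gibbs N s \<beta> \<alpha> E \<le> (\<Sum>\<sigma>\<in>E \<inter> configs N. gibbs_weight N s \<beta> \<alpha> \<sigma>)"
proof -
  have "(\<Sum>\<sigma>\<in>configs N. (1/2::real)^N) \<le> partition_fn N s \<beta> \<alpha>"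
    unfolding partition_fn_def gibbs_weight_def energy_def
    using interA_form_bounds(1)[OF assms] by (intro sum_mono) simp
  then have "1 \<le> partition_fn N s \<beta> \<alpha>"
    by (simp add: card_configs power_one_over)
  moreover have "0 \<le> (\<Sum>\<sigma>\<in>E \<inter> configs N. gibbs_weight N s \<beta> \<alpha> \<sigma>)"
    unfolding gibbs_weight_def by (intro sum_nonneg) simp
  ultimately show ?thesis
    unfolding gibbs_def by (simp add: divide_le_eq mult_le_cancel_left1 mult_left_mono)
qed

definition large_block_sums :: "nat \<Rightarrow> real \<Rightarrow> int set" where
  "large_block_sums n \<delta> = {j. \<bar>j\<bar> \<le> int n \<and> \<delta> * n < \<bar>real_of_int j\<bar>}"

lemma finite_large_block_sums: "finite (large_block_sums n \<delta>)"
  by (rule finite_subset[of _ "{-int n..int n}"]) (auto simp: large_block_sums_def)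

lemma card_large_block_sums_le: "card (large_block_sums n \<delta>) \<le> 2*n + 1"
proof -
  have "card (large_block_sums n \<delta>) \<le> card {-int n..int n}"
    by (rule card_mono) (auto simp: large_block_sums_def)
  then show ?thesis by simp
qed

lemma energy_le_block_sums:
  assumes "0 < s" "0 \<le> \<alpha>" "2*\<alpha> \<le> \<beta>"
  shows "energy (s*n) s \<beta> \<alpha> \<sigma> \<le> (\<Sum>k<s. (\<beta> + 2*\<alpha>) * block_sum n \<sigma> k ^ 2 / (2 * real n))"
proof -
  let ?m = "blockmag (s*n) s \<sigma>"
  have "energy (s*n) s \<beta> \<alpha> \<sigma> \<le> n/2 * ((\<beta> + 2*\<alpha>) * (\<Sum>k<s. ?m k ^ 2))"
    unfolding energy_def using assms interA_form_bounds(2)[OF assms, of ?m]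
    by (simp add: mult_left_mono)
  also have "\<dots> = (\<Sum>k<s. (\<beta> + 2*\<alpha>) * block_sum n \<sigma> k ^ 2 / (2 * real n))"
    using assms(1) by (cases "n = 0")
      (simp_all add: blockmag_eq_block_sum sum_distrib_left power_divide power2_eq_square)
  finally show ?thesis .
qed

lemma gibbs_weight_le_block_mixture:
  fixes t :: "int \<Rightarrow> real" and \<beta> \<alpha> :: real
  assumes "0 < s" "0 < n" "0 \<le> \<alpha>" "2*\<alpha> \<le> \<beta>" and \<sigma>: "\<sigma> \<in> all_large (s*n) s \<delta>"
  shows "gibbs_weight (s*n) s \<beta> \<alpha> \<sigma> \<le> (1/2)^(s*n) * (\<Prod>k<s. \<Sum>j\<in>large_block_sums n \<delta>.
           exp ((\<beta> + 2*\<alpha>) * of_int j ^ 2 / (2 * real n) - t j * j) * exp (t j * block_sum n \<sigma> k))"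
proof -
  let ?c = "\<beta> + 2*\<alpha>" and ?J = "large_block_sums n \<delta>"
  let ?f = "\<lambda>k j. exp (?c * of_int j ^ 2 / (2 * real n) - t j * j) * exp (t j * block_sum n \<sigma> k)"
  have "exp (energy (s*n) s \<beta> \<alpha> \<sigma>) \<le> exp (\<Sum>k<s. ?c * block_sum n \<sigma> k ^ 2 / (2 * real n))"
    using energy_le_block_sums[OF assms(1,3,4)] by simp
  also have "\<dots> = (\<Prod>k<s. exp (?c * block_sum n \<sigma> k ^ 2 / (2 * real n)))"
    by (simp add: exp_sum)
  also have "\<dots> \<le> (\<Prod>k<s. \<Sum>j\<in>?J. ?f k j)"
  proof (rule prod_mono, intro conjI)
    fix k assume "k \<in> {..<s}"
    then obtain j :: int where j: "block_sum n \<sigma> k = j" "\<bar>j\<bar> \<le> n"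
      using block_sum_int \<sigma> unfolding all_large_def by blast
    have "\<delta> < \<bar>j / n\<bar>"
      using \<sigma> \<open>k \<in> {..<s}\<close> j(1) assms(1)
      by (auto simp: all_large_def blockmag_eq_block_sum)
    then have "j \<in> ?J"
      using j(2) assms(2) by (simp add: large_block_sums_def abs_divide field_simps)
    \<comment> \<open>the summand for the actual value of the block sum is exact, whatever the tilt\<close>
    have "exp (?c * block_sum n \<sigma> k ^ 2 / (2 * real n)) = ?f k j"
      by (simp add: j(1) exp_add[symmetric])
    also have "\<dots> \<le> (\<Sum>j\<in>?J. ?f k j)"
      by (rule member_le_sum[OF \<open>j \<in> ?J\<close> _ finite_large_block_sums]) simp
    finally show "exp (?c * block_sum n \<sigma> k ^ 2 / (2 * real n)) \<le> (\<Sum>j\<in>?J. ?f k j)" .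
  qed simp
  finally show ?thesis
    unfolding gibbs_weight_def by (simp add: mult.commute)
qed

lemma tilted_term_le:
  fixes j :: int and c l :: real
  assumes "c \<le> 1" "0 < n" "0 \<le> \<delta>" "j \<in> large_block_sums n \<delta>"
    and l: "cosh l \<le> exp (l * (j/n) - (j/n)^2/2 - (j/n)^4/12)"
  shows "exp (c * of_int j ^ 2 / (2 * real n) - l * j) * cosh l ^ n \<le> exp (-(n * ((1-c) * \<delta>^2/2 + \<delta>^4/12)))"
proof -
  define x where "x = j / n"
  have j: "real_of_int j = n * x" unfolding x_def using assms(2) by simp
  have "\<delta> < \<bar>x\<bar>"
    using assms(2,4) unfolding x_def large_block_sums_def by (simp add: abs_divide field_simps)
  then have "\<delta>^2 \<le> x^2"
    using assms(3) by (simp add: abs_le_square_iff[symmetric])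
  moreover have "\<delta>^4 \<le> x^4"
    using power_mono[OF \<open>\<delta>^2 \<le> x^2\<close>, of 2] by (simp flip: power_mult)
  moreover have "(1-c) * \<delta>^2 \<le> (1-c) * x^2"
    using \<open>\<delta>^2 \<le> x^2\<close> assms(1) by (intro mult_left_mono) simp_all
  ultimately have rate: "(1-c) * \<delta>^2/2 + \<delta>^4/12 \<le> (1-c) * x^2/2 + x^4/12"
    by linarith
  have "cosh l ^ n \<le> exp (l * x - x^2/2 - x^4/12) ^ n"
    using l unfolding x_def by (intro power_mono) simp_all
  then have "exp (c * of_int j ^ 2 / (2 * real n) - l * j) * cosh l ^ n
      \<le> exp (c * of_int j ^ 2 / (2 * real n) - l * j) * exp (n * (l * x - x^2/2 - x^4/12))"
    by (simp add: exp_of_nat_mult[symmetric])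
  also have "\<dots> = exp (-(n * ((1-c) * x^2/2 + x^4/12)))"
    unfolding j using assms(2) by (simp add: exp_add[symmetric] power2_eq_square field_simps)
  also have "\<dots> \<le> exp (-(n * ((1-c) * \<delta>^2/2 + \<delta>^4/12)))"
    using rate by (simp add: mult_left_mono)
  finally show ?thesis .
qed

lemma gibbs_all_large_le:
  fixes \<beta> \<alpha> :: real
  assumes "0 \<le> \<alpha>" "2*\<alpha> \<le> \<beta>" "\<beta> + 2*\<alpha> \<le> 1" "0 < s" "0 < n" "0 \<le> \<delta>"
  shows "gibbs (s*n) s \<beta> \<alpha> (all_large (s*n) s \<delta>)
     \<le> ((2 * real n + 1) * exp (-(n * ((1 - (\<beta> + 2*\<alpha>)) * \<delta>^2/2 + \<delta>^4/12)))) ^ s"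
proof -
  define c J B where "c = \<beta> + 2*\<alpha>" and "J = large_block_sums n \<delta>"
    and "B = exp (-(n * ((1 - c) * \<delta>^2/2 + \<delta>^4/12)))"
  have "\<forall>j\<in>J. \<exists>l. cosh l \<le> exp (l * (j/n) - (j/n)^2/2 - (j/n)^4/12)"
    using assms(5) by (intro ballI cosh_chernoff_bound)
      (auto simp: J_def large_block_sums_def abs_divide divide_le_eq_1)
  then obtain t where t: "\<forall>j\<in>J. cosh (t j) \<le> exp (t j * (j/n) - (j/n)^2/2 - (j/n)^4/12)"
    by metis
  define a where "a j = exp (c * of_int j ^ 2 / (2 * real n) - t j * j)" for j :: int
  have "gibbs (s*n) s \<beta> \<alpha> (all_large (s*n) s \<delta>)
      \<le> (\<Sum>\<sigma>\<in>all_large (s*n) s \<delta> \<inter> configs (s*n). gibbs_weight (s*n) s \<beta> \<alpha> \<sigma>)"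
    using assms by (intro gibbs_le_sum_gibbs_weight) auto
  also have "\<dots> \<le> (\<Sum>\<sigma>\<in>configs (s*n). (1/2)^(s*n) *
                    (\<Prod>k<s. \<Sum>j\<in>J. a j * exp (t j * block_sum n \<sigma> k)))"
  proof (rule sum_le_included[where i = id])
    show "\<forall>\<sigma>\<in>configs (s*n). 0 \<le> (1/2)^(s*n) * (\<Prod>k<s. \<Sum>j\<in>J. a j * exp (t j * block_sum n \<sigma> k))"
      by (auto simp: a_def intro!: mult_nonneg_nonneg prod_nonneg sum_nonneg)
    show "\<forall>\<sigma>\<in>all_large (s*n) s \<delta> \<inter> configs (s*n). \<exists>\<tau>\<in>configs (s*n). id \<tau> = \<sigma> \<and>
        gibbs_weight (s*n) s \<beta> \<alpha> \<sigma> \<le> (1/2)^(s*n) * (\<Prod>k<s. \<Sum>j\<in>J. a j * exp (t j * block_sum n \<tau> k))"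
      using gibbs_weight_le_block_mixture[OF assms(4,5,1,2)] by (auto simp: a_def c_def J_def)
  qed (simp_all add: finite_configs)
  also have "\<dots> = (\<Sum>j\<in>J. a j * cosh (t j) ^ n) ^ s"
    unfolding J_def by (rule sum_configs_block_mixture[OF finite_large_block_sums])
  also have "\<dots> \<le> (card J * B) ^ s"
  proof (intro power_mono sum_bounded_above)
    show "a j * cosh (t j) ^ n \<le> B" if "j \<in> J" for j
      unfolding a_def B_def c_def
      using tilted_term_le[of c n \<delta> j "t j"] t that assms unfolding J_def c_def by auto
  qed (simp add: a_def sum_nonneg)
  also have "\<dots> \<le> ((2 * real n + 1) * B) ^ s"
    using card_large_block_sums_le[of n \<delta>] unfolding J_def
    by (intro power_mono mult_right_mono) (simp_all add: B_def)
  finally show ?thesis unfolding B_def c_def .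
qed

lemma block_size_tendsto_at_top:
  assumes "\<forall>N. 0 < s N" "\<forall>N. s N dvd N" "(\<lambda>N. real (s N) / real N) \<longlonglongrightarrow> 0"
  shows "filterlim (\<lambda>N. real (N div s N)) at_top sequentially"
proof -
  have "\<forall>\<^sub>F N in sequentially. 0 < real (s N) / real N"
    using assms(1) by (auto intro!: eventually_sequentiallyI[of 1])
  with assms(3) have "filterlim (\<lambda>N. real (s N) / real N) (at_right 0) sequentially"
    by (rule tendsto_imp_filterlim_at_right)
  from filterlim_compose[OF filterlim_inverse_at_top_right this]
  show ?thesis
    using assms(2) by (simp add: real_of_nat_div)
qed

lemma power_mult_exp_eq_exp:
  assumes "0 < real n"
  shows "((2 * real n + 1) * exp (-(n * R))) ^ s
       = exp (-(real (s*n) * (R - ln (2 * real n + 1) / n)))"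
proof -
  have "(2 * real n + 1) * exp (-(n * R)) = exp (ln (2 * real n + 1) - n * R)"
    by (simp add: exp_diff exp_minus divide_inverse)
  then have "((2 * real n + 1) * exp (-(n * R))) ^ s = exp (s * (ln (2 * real n + 1) - n * R))"
    by (simp add: exp_of_nat_mult)
  also have "s * (ln (2 * real n + 1) - n * R) = -(real (s*n) * (R - ln (2 * real n + 1) / n))"
    using assms by (simp add: field_simps)
  finally show ?thesis .
qed

lemma gibbs_all_large_eventually_le:
  fixes \<beta> \<alpha> \<delta> :: real
  assumes "0 \<le> \<alpha>" "2*\<alpha> \<le> \<beta>" "\<beta> + 2*\<alpha> \<le> 1" "0 \<le> \<delta>"
    and "\<forall>N. 0 < s N" "\<forall>N. s N dvd N" "(\<lambda>N. real (s N) / real N) \<longlonglongrightarrow> 0"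
  shows "\<exists>h. h \<longlonglongrightarrow> 0 \<and> (\<forall>\<^sub>F N in sequentially. gibbs N (s N) \<beta> \<alpha> (all_large N (s N) \<delta>)
           \<le> exp (-(real N * ((1 - (\<beta> + 2*\<alpha>)) * \<delta>^2/2 + \<delta>^4/12 - h N))))"
proof -
  define n where "n N = N div s N" for N
  define R where "R = (1 - (\<beta> + 2*\<alpha>)) * \<delta>^2/2 + \<delta>^4/12"
  define h where "h N = ln (2 * real (n N) + 1) / real (n N)" for N
  have n: "filterlim (\<lambda>N. real (n N)) at_top sequentially"
    unfolding n_def using assms(5-7) by (rule block_size_tendsto_at_top)
  have "((\<lambda>y::real. ln (2*y + 1) / y) \<longlongrightarrow> 0) at_top"
    by real_asymp
  then have "h \<longlonglongrightarrow> 0"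
    unfolding h_def by (rule filterlim_compose[OF _ n])
  moreover have "\<forall>\<^sub>F N in sequentially. 0 < real (n N)"
    using n unfolding filterlim_at_top_dense by blast
  then have "\<forall>\<^sub>F N in sequentially. gibbs N (s N) \<beta> \<alpha> (all_large N (s N) \<delta>) \<le> exp (-(real N * (R - h N)))"
  proof eventually_elim
    case (elim N)
    have N: "N = s N * n N" using assms(6) by (simp add: n_def)
    have "gibbs N (s N) \<beta> \<alpha> (all_large N (s N) \<delta>)
        \<le> ((2 * real (n N) + 1) * exp (-(n N * R))) ^ s N"
      using gibbs_all_large_le[of \<alpha> \<beta> "s N" "n N" \<delta>] assms elim N unfolding R_def by simp
    also have "\<dots> = exp (-(real N * (R - h N)))"
      using power_mult_exp_eq_exp[OF elim, of R "s N"] N by (simp add: h_def)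
    finally show ?case .
  qed
  ultimately show ?thesis unfolding R_def by blast
qed

lemma exp_neg_mult_tendsto_zero:
  fixes h :: "nat \<Rightarrow> real" assumes "h \<longlonglongrightarrow> 0" "0 < R"
  shows "(\<lambda>N. exp (-(real N * (R - h N)))) \<longlonglongrightarrow> 0"
proof -
  have "filterlim (\<lambda>N. (R - h N) * real N) at_top sequentially"
    using assms by (intro filterlim_tendsto_pos_mult_at_top filterlim_real_sequentially)
      (auto intro!: tendsto_eq_intros)
  then have "filterlim (\<lambda>N. -(real N * (R - h N))) at_bot sequentially"
    by (simp add: filterlim_uminus_at_top[symmetric] mult.commute)
  then show ?thesis
    by (rule filterlim_compose[OF exp_at_bot])
qed

theorem lemma3p2:
  fixes s :: "nat \<Rightarrow> nat" and \<beta> \<alpha> \<delta> :: real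
  assumes "0 < \<alpha>" and "2 * \<alpha> < \<beta>"
    and "\<forall>N. 0 < s N" and "\<forall>N. s N dvd N" and "mono s"
    and "0 < \<delta>" and "\<delta> < 1"
    and "(\<lambda>N. real (s N) / real N) \<longlonglongrightarrow> 0"
  shows "(\<beta> + 2 * \<alpha> < 1 \<longrightarrow>
            (\<exists>g :: nat \<Rightarrow> real. g \<longlonglongrightarrow> 0 \<and>
               (\<forall>\<^sub>F N in sequentially. gibbs N (s N) \<beta> \<alpha> (all_large N (s N) \<delta>)
                  \<le> exp (- (((1 - (\<beta> + 2 * \<alpha>)) / 2 - g N) * real N * \<delta>^2))))
            \<and> (\<lambda>N. gibbs N (s N) \<beta> \<alpha> (all_large N (s N) \<delta>)) \<longlonglongrightarrow> 0)
       \<and> (\<beta> + 2 * \<alpha> = 1 \<longrightarrow>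
            (\<exists>g :: nat \<Rightarrow> real. g \<longlonglongrightarrow> 0 \<and>
               (\<forall>\<^sub>F N in sequentially. gibbs N (s N) \<beta> \<alpha> (all_large N (s N) \<delta>)
                  \<le> exp (- ((1 / 12 - g N) * real N * \<delta>^4)))))"
proof (cases "\<beta> + 2 * \<alpha> \<le> 1")
  case True
  let ?\<mu> = "\<lambda>N. gibbs N (s N) \<beta> \<alpha> (all_large N (s N) \<delta>)"
  define R where "R = (1 - (\<beta> + 2*\<alpha>)) * \<delta>^2/2 + \<delta>^4/12"
  obtain h where h: "h \<longlonglongrightarrow> 0" and bound: "\<forall>\<^sub>F N in sequentially. ?\<mu> N \<le> exp (-(real N * (R - h N)))"
    using gibbs_all_large_eventually_le[of \<alpha> \<beta> \<delta> s] True assms unfolding R_def by auto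
  have "(\<lambda>N. h N / \<delta>^2) \<longlonglongrightarrow> 0" "(\<lambda>N. h N / \<delta>^4) \<longlonglongrightarrow> 0"
    using tendsto_divide_zero[OF h] by auto
  moreover have "\<forall>\<^sub>F N in sequentially. ?\<mu> N \<le> exp (- (((1 - (\<beta> + 2 * \<alpha>)) / 2 - h N / \<delta>^2) * real N * \<delta>^2))"
    using bound by eventually_elim (erule order.trans, use assms(6) in \<open>simp add: R_def field_simps\<close>)
  moreover have "\<forall>\<^sub>F N in sequentially. ?\<mu> N \<le> exp (- ((1 / 12 - h N / \<delta>^4) * real N * \<delta>^4))"
    if "\<beta> + 2 * \<alpha> = 1"
  proof -
    have exponent: "(1 / 12 - h N / \<delta>^4) * real N * \<delta>^4 = real N * (R - h N)" for N
      using that assms(6) by (simp add: R_def field_simps)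
    show ?thesis unfolding exponent using bound .
  qed
  moreover have "?\<mu> \<longlonglongrightarrow> 0" if "\<beta> + 2 * \<alpha> < 1"
    using that assms(6) by (intro tendsto_sandwich[OF _ bound tendsto_const exp_neg_mult_tendsto_zero[OF h]])
      (simp_all add: gibbs_nonneg R_def add_pos_nonneg)
  ultimately show ?thesis by blast
qed (use assms in simp)

end
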